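(* Let $\mathrm{Prime}\colon\mathbb{N}\to P(\mathbb{N})$, $\mathrm{Prime}(n)=\{p\mid p \text{ prime},\ \exists k\in\mathbb{N}\colon n=k\cdot p\}$. Then $\mathrm{Wall}_{\aleph_0}(\mathrm{Prime},\mathbb{N})$ equals the family of all $U\subset\mathbb{N}$ such that the set of natural numbers having a prime divisor not in $U$ is finite, and $\mathrm{Wall}_{\aleph_0}(\mathrm{Prime},\mathbb{N})$ is a proper filter on $\mathbb{N}$ but not an ultrafilter.
   Context: $\mathbb{N}=\{0,1,2,\dots\}$. For a multifunction $F\colon X\to P(X)$ and $B\subset X$, $F_{+}(B)=\{x\in X\mid F(x)\subset B\}$, and $\mathrm{Wall}_{\aleph_0}(F,X)=\{U\subset X\mid |X\setminus F_{+}(U)|<\aleph_0\}$. A filter on $X$ is a nonempty family $\Phi\subset P(X)$ with $A,B\in\Phi\iff A\cap B\in\Phi$; it is proper if $\emptyset\notin\Phi$; an ultrafilter is a proper filter such that for every $U\subset X$, $U\in\Phi$ or $X\setminus U\in\Phi$. *)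

theory Defs
  imports "HOL-Computational_Algebra.Primes"
begin

definition Prime_mf :: "nat \<Rightarrow> nat set" where
  "Prime_mf n = {p. prime p \<and> (\<exists>k. n = k * p)}"

definition upper_inv :: "'a set \<Rightarrow> ('a \<Rightarrow> 'a set) \<Rightarrow> 'a set \<Rightarrow> 'a set" where
  "upper_inv X F B = {x \<in> X. F x \<subseteq> B}"

definition Wall_aleph0 :: "('a \<Rightarrow> 'a set) \<Rightarrow> 'a set \<Rightarrow> 'a set set" where
  "Wall_aleph0 F X = {U. U \<subseteq> X \<and> finite (X - upper_inv X F U)}"

definition is_filter_on :: "'a set \<Rightarrow> 'a set set \<Rightarrow> bool" where
  "is_filter_on X \<Phi> \<longleftrightarrow> \<Phi> \<noteq> {} \<and> \<Phi> \<subseteq> Pow X \<and>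
     (\<forall>A \<in> Pow X. \<forall>B \<in> Pow X. (A \<in> \<Phi> \<and> B \<in> \<Phi>) \<longleftrightarrow> A \<inter> B \<in> \<Phi>)"

definition is_proper_filter_on :: "'a set \<Rightarrow> 'a set set \<Rightarrow> bool" where
  "is_proper_filter_on X \<Phi> \<longleftrightarrow> is_filter_on X \<Phi> \<and> {} \<notin> \<Phi>"

definition is_ultrafilter_on :: "'a set \<Rightarrow> 'a set set \<Rightarrow> bool" where
  "is_ultrafilter_on X \<Phi> \<longleftrightarrow> is_proper_filter_on X \<Phi> \<and>
     (\<forall>U \<in> Pow X. U \<in> \<Phi> \<or> X - U \<in> \<Phi>)"

end

theory Submission
  imports Defs
begin

(* Every prime p has infinitely many multiples, so a cofinite set of numbers can only miss
   prime divisors outside U if there are none: the wall is the principal filter generated by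
   the set of primes. That filter is proper because 2 is prime, and not an ultrafilter because
   there are two distinct primes, 2 and 3, which {2} and its complement separate. *)

lemma Prime_mf_eq_prime_divisors: "Prime_mf n = {p. prime p \<and> p dvd n}"
  unfolding Prime_mf_def by (auto simp: dvd_def mult.commute)

lemma compl_upper_inv_Prime_mf:
  "UNIV - upper_inv UNIV Prime_mf U = {n. \<exists>p. prime p \<and> p dvd n \<and> p \<notin> U}"
  unfolding upper_inv_def Prime_mf_eq_prime_divisors by auto

lemma infinite_multiples_nat:
  fixes p :: nat
  assumes "p > 0"
  shows "infinite {n. p dvd n}"
proof -
  have "inj (\<lambda>k. p * k)"
    using assms by (auto simp: inj_def)
  then have "infinite (range (\<lambda>k. p * k))"
    using finite_imageD by blast
  moreover have "range (\<lambda>k. p * k) \<subseteq> {n. p dvd n}"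
    by auto
  ultimately show ?thesis
    using finite_subset by blast
qed

lemma finite_has_prime_divisor_outside_iff:
  "finite {n::nat. \<exists>p. prime p \<and> p dvd n \<and> p \<notin> U} \<longleftrightarrow> {p. prime p} \<subseteq> U"
proof
  assume fin: "finite {n::nat. \<exists>p. prime p \<and> p dvd n \<and> p \<notin> U}"
  show "{p. prime p} \<subseteq> U"
  proof (rule subsetI, rule ccontr)
    fix p :: nat
    assume "p \<in> {p. prime p}" and "p \<notin> U"
    then have "{n. p dvd n} \<subseteq> {n. \<exists>p. prime p \<and> p dvd n \<and> p \<notin> U}"
      by auto
    moreover have "infinite {n. p dvd n}"
      using \<open>p \<in> {p. prime p}\<close> by (simp add: infinite_multiples_nat prime_gt_0_nat)
    ultimately show False
      using fin finite_subset by blast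
  qed
next
  assume "{p. prime p} \<subseteq> U"
  then have "{n::nat. \<exists>p. prime p \<and> p dvd n \<and> p \<notin> U} = {}"
    by blast
  then show "finite {n::nat. \<exists>p. prime p \<and> p dvd n \<and> p \<notin> U}"
    by (simp only: finite.emptyI)
qed

lemma Wall_aleph0_Prime_mf: "Wall_aleph0 Prime_mf UNIV = {U. {p::nat. prime p} \<subseteq> U}"
  unfolding Wall_aleph0_def compl_upper_inv_Prime_mf finite_has_prime_divisor_outside_iff
  by simp

lemma is_proper_filter_on_principal:
  assumes "A \<subseteq> X" and "A \<noteq> {}"
  shows "is_proper_filter_on X {U. A \<subseteq> U \<and> U \<subseteq> X}"
  using assms unfolding is_proper_filter_on_def is_filter_on_def by auto

lemma not_is_ultrafilter_on_principal:
  assumes "a \<in> A" and "b \<in> A" and "a \<noteq> b"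
  shows "\<not> is_ultrafilter_on X {U. A \<subseteq> U \<and> U \<subseteq> X}"
proof
  assume "is_ultrafilter_on X {U. A \<subseteq> U \<and> U \<subseteq> X}"
  then have "X \<inter> {a} \<in> {U. A \<subseteq> U \<and> U \<subseteq> X} \<or> X - X \<inter> {a} \<in> {U. A \<subseteq> U \<and> U \<subseteq> X}"
    unfolding is_ultrafilter_on_def by blast
  then show False
    using assms by auto
qed

theorem lemma6p16:
  shows "Wall_aleph0 Prime_mf UNIV =
           {U. finite {n::nat. \<exists>p. prime p \<and> p dvd n \<and> p \<notin> U}}
         \<and> is_proper_filter_on UNIV (Wall_aleph0 Prime_mf UNIV)
         \<and> \<not> is_ultrafilter_on UNIV (Wall_aleph0 Prime_mf UNIV)"
proof (intro conjI)
  have principal: "Wall_aleph0 Prime_mf UNIV = {U. {p::nat. prime p} \<subseteq> U \<and> U \<subseteq> UNIV}"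
    by (simp add: Wall_aleph0_Prime_mf)
  have "prime (2::nat)" and "prime (3::nat)"
    by simp_all
  show "Wall_aleph0 Prime_mf UNIV = {U. finite {n::nat. \<exists>p. prime p \<and> p dvd n \<and> p \<notin> U}}"
    by (simp add: Wall_aleph0_Prime_mf finite_has_prime_divisor_outside_iff)
  show "is_proper_filter_on UNIV (Wall_aleph0 Prime_mf UNIV)"
    unfolding principal using \<open>prime 2\<close> by (intro is_proper_filter_on_principal) auto
  show "\<not> is_ultrafilter_on UNIV (Wall_aleph0 Prime_mf UNIV)"
    unfolding principal
    by (rule not_is_ultrafilter_on_principal[of 2 _ 3]) (use \<open>prime 2\<close> \<open>prime 3\<close> in auto)
qed

end
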